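(* Let $F\colon\Omega\to\Omega$ be a piecewise translation in $\mathbb{R}^d$ with $m=d+1$ branches whose translation vectors $v_0,\dots,v_d$ have the property that any $d$ of them are linearly independent. Then for every $x\in\Omega$ and every $j\in\{0,\dots,d\}$ the set $\{n\ge0 : i(F^n(x))=j\}$ is infinite.
   Context: A region is a compact subset of $\mathbb{R}^d$ which equals the closure of its interior. A piecewise translation with $m$ branches: $\Omega\subset\mathbb{R}^d$ is a region, $\Omega=P_0\cup\dots\cup P_{m-1}$ with each $P_i$ a region, distinct $P_i$ intersecting only in boundaries, $\mathrm{Leb}(\partial P_i)=0$; vectors $v_i$ satisfy $x+v_i\in\Omega$ for $x\in P_i$; $i(x)$ is an index with $x\in P_{i(x)}$ (boundary ambiguity resolved by a fixed measurable rule), and $F(x)=x+v_{i(x)}$. *)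

theory Defs
  imports "HOL-Analysis.Analysis"
begin

definition region :: "'a::euclidean_space set \<Rightarrow> bool" where
  "region S \<longleftrightarrow> compact S \<and> closure (interior S) = S"

definition piecewise_translation ::
  "'a::euclidean_space set \<Rightarrow> nat \<Rightarrow> (nat \<Rightarrow> 'a set) \<Rightarrow> (nat \<Rightarrow> 'a) \<Rightarrow> ('a \<Rightarrow> nat) \<Rightarrow> bool" where
  "piecewise_translation \<Omega> m P v idx \<longleftrightarrow>
     region \<Omega> \<and>
     \<Omega> = (\<Union>i<m. P i) \<and>
     (\<forall>i<m. region (P i)) \<and>
     (\<forall>i<m. \<forall>j<m. i \<noteq> j \<longrightarrow> P i \<inter> P j \<subseteq> frontier (P i) \<inter> frontier (P j)) \<and>
     (\<forall>i<m. frontier (P i) \<in> null_sets lebesgue) \<and>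
     (\<forall>i<m. \<forall>x\<in>P i. x + v i \<in> \<Omega>) \<and>
     (\<forall>x\<in>\<Omega>. idx x < m \<and> x \<in> P (idx x)) \<and>
     idx \<in> measurable lebesgue (count_space UNIV)"

definition pt_map :: "(nat \<Rightarrow> 'a::euclidean_space) \<Rightarrow> ('a \<Rightarrow> nat) \<Rightarrow> 'a \<Rightarrow> 'a" where
  "pt_map v idx x = x + v (idx x)"

end

theory Submission
  imports Defs
begin

text \<open>If the orbit of x avoided branch j from some time N on, then every later step would be a
  translation by one of the vectors v i with i \<noteq> j. These are linearly independent, so some linear
  functional g takes the value 1 on all of them; g would then increase by 1 at each step, whereas
  the orbit stays in the compact domain, on which g is bounded.\<close>

lemma piecewise_translation_idx_less:
  assumes "piecewise_translation \<Omega> m P v idx" and "y \<in> \<Omega>"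
  shows "idx y < m"
  using assms unfolding piecewise_translation_def by simp

lemma piecewise_translation_bounded_domain:
  assumes "piecewise_translation \<Omega> m P v idx"
  shows "bounded \<Omega>"
proof -
  have "compact \<Omega>"
    using assms unfolding piecewise_translation_def region_def by (elim conjE)
  then show ?thesis
    by (rule compact_imp_bounded)
qed

lemma pt_map_in_domain:
  assumes "piecewise_translation \<Omega> m P v idx" and "y \<in> \<Omega>"
  shows "pt_map v idx y \<in> \<Omega>"
  using assms unfolding piecewise_translation_def pt_map_def by blast

lemma funpow_pt_map_in_domain:
  assumes "piecewise_translation \<Omega> m P v idx" and "x \<in> \<Omega>"
  shows "(pt_map v idx ^^ n) x \<in> \<Omega>"
  by (induction n) (use assms pt_map_in_domain in auto)

lemma independent_imp_linear_eq_1: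
  fixes B :: "'a::real_vector set"
  assumes "independent B"
  obtains g :: "'a \<Rightarrow> real" where "linear g" and "\<And>b. b \<in> B \<Longrightarrow> g b = 1"
  using real_vector.linear_independent_extend[OF assms, of "\<lambda>_. 1"] by blast

lemma bounded_linear_no_eventual_unit_drift:
  fixes s :: "nat \<Rightarrow> 'a::real_normed_vector" and g :: "'a \<Rightarrow> real"
  assumes "bounded_linear g" and "bounded (range s)"
    and drift: "\<And>n. n \<ge> N \<Longrightarrow> g (s n) + 1 \<le> g (s (Suc n))"
  shows False
proof -
  have "bounded (range (g \<circ> s))"
    using bounded_linear_image[OF assms(2,1)] by (simp add: image_comp)
  then obtain B where B: "\<And>n. \<bar>g (s n)\<bar> \<le> B"
    unfolding bounded_iff by auto
  have growth: "g (s N) + real k \<le> g (s (N + k))" for k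
  proof (induction k)
    case (Suc k)
    with drift[of "N + k"] show ?case by simp
  qed simp
  obtain k :: nat where "real k > 2 * B"
    using reals_Archimedean2 by blast
  with growth[of k] B[of N] B[of "N + k"] show False
    by linarith
qed

lemma piecewise_translation_visits_branch_infinitely_often:
  assumes pt: "piecewise_translation \<Omega> m P v idx"
    and indep: "independent (v ` ({..<m} - {j}))"
    and x: "x \<in> \<Omega>"
  shows "infinite {n. idx ((pt_map v idx ^^ n) x) = j}"
proof
  define s where "s n = (pt_map v idx ^^ n) x" for n
  assume "finite {n. idx ((pt_map v idx ^^ n) x) = j}"
  then obtain N where "{n. idx (s n) = j} \<subseteq> {..<N}"
    unfolding s_def using finite_nat_bounded by blast
  then have avoid: "\<And>n. n \<ge> N \<Longrightarrow> idx (s n) \<noteq> j"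
    by auto
  obtain g :: "'a \<Rightarrow> real" where g: "linear g" and g1: "\<And>b. b \<in> v ` ({..<m} - {j}) \<Longrightarrow> g b = 1"
    using independent_imp_linear_eq_1[OF indep] by blast
  have orbit: "s n \<in> \<Omega>" for n
    unfolding s_def using funpow_pt_map_in_domain[OF pt x] .
  from orbit piecewise_translation_bounded_domain[OF pt] have bounded: "bounded (range s)"
    by (blast intro: bounded_subset)
  have drift: "g (s n) + 1 \<le> g (s (Suc n))" if "n \<ge> N" for n
  proof -
    from piecewise_translation_idx_less[OF pt orbit] avoid[OF that] have "g (v (idx (s n))) = 1"
      using g1 by blast
    then show ?thesis
      using linear_add[OF g] by (simp add: s_def pt_map_def)
  qed
  from g have "bounded_linear g"
    by (simp add: linear_conv_bounded_linear)
  from this bounded drift show False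
    by (rule bounded_linear_no_eventual_unit_drift)
qed

theorem proposition2p4:
  fixes \<Omega> :: "'a::euclidean_space set" and P :: "nat \<Rightarrow> 'a set"
    and v :: "nat \<Rightarrow> 'a" and idx :: "'a \<Rightarrow> nat"
  assumes pt: "piecewise_translation \<Omega> (DIM('a) + 1) P v idx"
    and indep: "\<forall>k\<le>DIM('a). inj_on v ({0..DIM('a)} - {k})
                   \<and> independent (v ` ({0..DIM('a)} - {k}))"
    and x: "x \<in> \<Omega>"
    and j: "j \<le> DIM('a)"
  shows "infinite {n::nat. idx ((pt_map v idx ^^ n) x) = j}"
proof -
  have "{0..DIM('a)} = {..<DIM('a) + 1}"
    by auto
  with indep j have "independent (v ` ({..<DIM('a) + 1} - {j}))"
    by simp
  then show ?thesis
    by (rule piecewise_translation_visits_branch_infinitely_often[OF pt _ x])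
qed

end
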